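(* For $d\geq 0$ and $n\geq 1$ let $\sigma_d(n)=\sum_{\ell\mid n}\ell^d$. For $n\geq 3$ define \[ D^{\sigma}(n):=\begin{cases} 2n\log_{9/8}(3), & n\equiv 0\pmod 3,\\ (2n+1)\log_{9/8}(3)-\log_{9/8}(n+2), & n\equiv 1\pmod 3,\\ \log_{9/8}(2)+(n+1)\log_{9/8}(3), & n\equiv 2\pmod 3,\ n\neq 5,\\ \log_{9/8}(3888), & n=5. \end{cases} \] Let $n\geq 3$ and let $d$ be an integer with $d>D^{\sigma}(n)$. Then \[ \frac{\bigl(q^{\sigma_d}(n)\bigr)^2}{q^{\sigma_d}(n-1)\,q^{\sigma_d}(n+1)}<1 \quad\text{if and only if}\quad n\equiv 1\pmod 3 . \]
   Context: For a double sequence $\{g_d(n)\}_{d\geq 0,n\geq 1}$ of positive reals, the numbers $q^{g_d}(n)$ ($n\geq 0$) are defined as the coefficients of the power series \[ \sum_{n=0}^{\infty} q^{g_d}(n)\,t^n := \frac{1}{1-\sum_{n=1}^{\infty} g_d(n)\,t^n}. \] Here $g_d=\sigma_d$, i.e. $\sum_n q^{\sigma_d}(n)t^n = 1/(1-\sum_{n\ge1} \sigma_d(n) t^n)$. $\log_{9/8}$ denotes the logarithm to base $9/8$. *)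

theory Defs
  imports "HOL-Analysis.Analysis" "HOL-Computational_Algebra.Formal_Power_Series"
begin

definition sigma :: "nat \<Rightarrow> nat \<Rightarrow> real" where
  "sigma d n = (\<Sum>l\<in>{l. l dvd n}. real l ^ d)"

definition qg :: "(nat \<Rightarrow> real) \<Rightarrow> nat \<Rightarrow> real" where
  "qg g n = fps_nth (inverse (1 - Abs_fps (\<lambda>k. if k = 0 then 0 else g k))) n"

definition Dsigma :: "nat \<Rightarrow> real" where
  "Dsigma n =
    (if n mod 3 = 0 then 2 * real n * log (9/8) 3
     else if n mod 3 = 1 then (2 * real n + 1) * log (9/8) 3 - log (9/8) (real n + 2)
     else if n = 5 then log (9/8) 3888
     else log (9/8) 2 + (real n + 1) * log (9/8) 3)"

end

theory Submission
  imports Defs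
begin

(* q^{sigma_d}(m) is the sum, over the compositions (j_1, ..., j_r) of m, of the products of the
   sigma_d(j_i), and sigma_d(j) = j^d (1 + O(j 2^-d)). For large d it is therefore governed by the
   compositions maximising j_1 ... j_r: if maxprod m is that maximum and num_optimal m the number of
   maximising compositions, then q^{sigma_d}(m) lies between num_optimal(m) maxprod(m)^d and
   (num_optimal(m) + (8/9)^d 3^m) maxprod(m)^d, because any other composition loses at least a factor
   (8/9)^d. Now maxprod(n)^2 / (maxprod(n-1) maxprod(n+1)) equals 9/8, 8/9 and 1 for n = 0, 1, 2 mod 3,
   and in the last case the counts decide: (k+2)^2 against (k+1)(k+4)/2 for n = 3k+5. The hypothesis
   d > D^sigma(n) is what makes (9/8)^d beat the remaining factors, which are polynomial in n or powers
   of 3. For n = 0, 1 mod 3 the cruder upper bound 2 3^(m-1) maxprod(m)^d already suffices. *)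

lemma qg_0: "qg g 0 = 1"
  by (simp add: qg_def)

lemma qg_recurrence:
  assumes "n > 0"
  shows "qg g n = (\<Sum>j=1..n. g j * qg g (n - j))"
proof -
  define F where "F = 1 - Abs_fps (\<lambda>k. if k = 0 then 0 else g k)"
  have F0: "fps_nth F 0 = 1" by (simp add: F_def)
  have "F * inverse F = 1" using F0 by (intro inverse_mult_eq_1') simp
  hence "(\<Sum>i=0..n. fps_nth F i * fps_nth (inverse F) (n - i)) = 0"
    using assms by (metis fps_mult_nth fps_one_nth less_numeral_extra(3))
  hence "fps_nth (inverse F) n - (\<Sum>i=1..n. g i * fps_nth (inverse F) (n - i)) = 0"
    by (simp add: sum.atLeast_Suc_atMost F0 F_def sum_negf)
  thus ?thesis by (simp add: qg_def F_def)
qed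

lemma qg_nonneg:
  assumes "\<And>k. 0 \<le> g k"
  shows "0 \<le> qg g n"
proof (induction n rule: less_induct)
  case (less n)
  show ?case
    using assms less by (cases "n = 0") (auto simp: qg_0 qg_recurrence intro!: sum_nonneg)
qed

lemma qg_ge_partial_sum:
  assumes "\<And>k. 0 \<le> g k" and "A \<subseteq> {1..n}"
  shows "(\<Sum>j\<in>A. g j * qg g (n - j)) \<le> qg g n"
proof (cases "n = 0")
  case True thus ?thesis using assms(2) by (simp add: qg_0)
next
  case False
  have "(\<Sum>j\<in>A. g j * qg g (n - j)) \<le> (\<Sum>j=1..n. g j * qg g (n - j))"
    using assms by (intro sum_mono2) (auto intro!: mult_nonneg_nonneg qg_nonneg)
  thus ?thesis using False by (simp add: qg_recurrence)
qed

lemma qg_ge_1: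
  assumes "\<And>k. 0 \<le> g k" and "1 \<le> g 1"
  shows "1 \<le> qg g n"
proof (induction n)
  case 0 thus ?case by (simp add: qg_0)
next
  case (Suc n)
  have "1 \<le> g 1 * qg g n" using Suc assms(2) by (metis mult_mono' mult_1 zero_le_one)
  also have "\<dots> \<le> qg g (Suc n)" using qg_ge_partial_sum[of g "{1}" "Suc n"] assms(1) by simp
  finally show ?case .
qed

lemma sigma_nonneg: "0 \<le> sigma d j"
  unfolding sigma_def by (intro sum_nonneg) auto

lemma power_le_sigma: "0 < j \<Longrightarrow> real j ^ d \<le> sigma d j"
  unfolding sigma_def by (rule member_le_sum) auto

lemma qg_sigma_pos: "0 < qg (sigma d) m"
  using qg_ge_1[of "sigma d" m] sigma_nonneg power_le_sigma[of 1 d] by fastforce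

lemma sigma_le_proper_divisors:
  assumes "0 < j"
  shows "sigma d j \<le> real j ^ d + real j * (real j / 2) ^ d"
proof -
  define D where "D = {l. l dvd j \<and> l \<noteq> j}"
  have "D \<subseteq> {1..j}" using assms by (auto simp: D_def dest: dvd_imp_le intro: Nat.gr0I)
  hence fin: "finite D" and card: "card D \<le> j" using finite_subset subset_eq_atLeast0_atMost_finite
    by (auto dest: card_mono[rotated])
  have "sigma d j = real j ^ d + (\<Sum>l\<in>D. real l ^ d)"
  proof -
    have "{l. l dvd j} = insert j D" by (auto simp: D_def)
    thus ?thesis unfolding sigma_def using fin by (simp add: D_def)
  qed
  also have "(\<Sum>l\<in>D. real l ^ d) \<le> real (card D) * (real j / 2) ^ d"
  proof (rule sum_bounded_above)
    fix l assume "l \<in> D"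
    then obtain c where c: "j = l * c" and "c \<noteq> 1" by (auto simp: D_def)
    with assms have "2 \<le> c" by (cases c) auto
    hence "2 * l \<le> j" using c by (metis mult.commute mult_le_mono2)
    hence "real l \<le> real j / 2" by simp
    thus "real l ^ d \<le> (real j / 2) ^ d" by (intro power_mono) auto
  qed
  also have "\<dots> \<le> real j * (real j / 2) ^ d" using card by (intro mult_right_mono) auto
  finally show ?thesis by simp
qed

lemma sigma_le_twice_power:
  assumes "0 < j" and "j \<le> 2 ^ d"
  shows "sigma d j \<le> 2 * real j ^ d"
proof -
  have "real j * (real j / 2) ^ d = real j / 2 ^ d * real j ^ d" by (simp add: power_divide)
  also have "\<dots> \<le> real j ^ d"
    using assms(2) by (intro mult_left_le_one_le) (auto simp: divide_le_eq_1 simp flip: of_nat_le_iff)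
  finally show ?thesis using sigma_le_proper_divisors[OF assms(1), of d] by simp
qed

(* maxprod m is the largest product of the parts of a composition of m. *)
fun maxprod :: "nat \<Rightarrow> nat" where
  "maxprod 0 = 1"
| "maxprod (Suc 0) = 1"
| "maxprod (Suc (Suc 0)) = 2"
| "maxprod (Suc (Suc (Suc 0))) = 3"
| "maxprod (Suc (Suc (Suc (Suc 0)))) = 4"
| "maxprod (Suc (Suc (Suc (Suc (Suc m))))) = 3 * maxprod (Suc (Suc m))"

lemma maxprod_add_3: "2 \<le> m \<Longrightarrow> maxprod (m + 3) = 3 * maxprod m"
  by (cases m rule: maxprod.cases) (auto simp: numeral_eq_Suc)

lemma maxprod_add_3_ge: "3 * maxprod m \<le> maxprod (m + 3)"
  by (cases m rule: maxprod.cases) (auto simp: numeral_eq_Suc)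

lemma maxprod_closed_form:
  "maxprod (3 * k) = 3 ^ k" "maxprod (3 * k + 2) = 2 * 3 ^ k" "maxprod (3 * k + 4) = 4 * 3 ^ k"
proof -
  show "maxprod (3 * k) = 3 ^ k"
  proof (induction k)
    case (Suc k) thus ?case
      by (cases k) (simp_all add: numeral_eq_Suc maxprod_add_3[of "3 * k", simplified add.commute])
  qed simp
  show "maxprod (3 * k + 2) = 2 * 3 ^ k"
  proof (induction k)
    case (Suc k)
    have "maxprod (3 * k + 2 + 3) = 3 * maxprod (3 * k + 2)" by (rule maxprod_add_3) simp
    thus ?case using Suc by (simp add: algebra_simps)
  qed simp
  show "maxprod (3 * k + 4) = 4 * 3 ^ k"
  proof (induction k)
    case (Suc k)
    have "maxprod (3 * k + 4 + 3) = 3 * maxprod (3 * k + 4)" by (rule maxprod_add_3) simp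
    thus ?case using Suc by (simp add: algebra_simps)
  qed (simp add: numeral_eq_Suc)
qed

(* optimal_part m j: some composition of m with product maxprod m has first part j. *)
definition optimal_part :: "nat \<Rightarrow> nat \<Rightarrow> bool" where
  "optimal_part m j \<longleftrightarrow> (m = 1 \<and> j = 1) \<or> (m = 2 \<and> j = 2) \<or> (m = 4 \<and> (j = 2 \<or> j = 4))
     \<or> (m \<ge> 3 \<and> m mod 3 = 0 \<and> j = 3) \<or> (m \<ge> 5 \<and> m mod 3 = 2 \<and> (j = 2 \<or> j = 3))
     \<or> (m \<ge> 7 \<and> m mod 3 = 1 \<and> (j = 2 \<or> j = 3 \<or> j = 4))"

lemma optimal_part_le_4: "optimal_part m j \<Longrightarrow> j \<le> 4"
  by (auto simp: optimal_part_def)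

lemma maxprod_values:
  "maxprod 0 = 1" "maxprod 1 = 1" "maxprod 2 = 2" "maxprod 3 = 3" "maxprod 4 = 4" "maxprod 5 = 6"
  "maxprod 6 = 9" "maxprod 7 = 12" "maxprod 8 = 18" "maxprod 9 = 27" "maxprod 10 = 36" "maxprod 11 = 54"
  by (simp_all add: numeral_eq_Suc)

lemma All_less_numeral: "(\<forall>i < numeral k. P i) \<longleftrightarrow> P (pred_numeral k) \<and> (\<forall>i < pred_numeral k. P i)"
  by (simp only: numeral_eq_Suc All_less_Suc)

lemma maxprod_small_part:
  assumes "1 \<le> j" "j \<le> 7" "j \<le> m"
  shows "(optimal_part m j \<longrightarrow> j * maxprod (m - j) = maxprod m) \<and>
         (\<not> optimal_part m j \<longrightarrow> 9 * j * maxprod (m - j) \<le> 8 * maxprod m)"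
  using assms
proof (induction m rule: less_induct)
  case (less m)
  show ?case
  proof (cases "m < 12")
    case True
    have "\<forall>m < 12. \<forall>j < 8. 1 \<le> j \<longrightarrow> j \<le> m \<longrightarrow>
        (optimal_part m j \<longrightarrow> j * maxprod (m - j) = maxprod m) \<and>
        (\<not> optimal_part m j \<longrightarrow> 9 * j * maxprod (m - j) \<le> 8 * maxprod m)"
      by (simp add: All_less_numeral optimal_part_def maxprod_values)
    thus ?thesis using True less.prems by auto
  next
    case False
    \<comment> \<open>both sides scale by 3 when 3 is subtracted from m, and optimality is 3-periodic for m \<ge> 7\<close>
    have "maxprod ((m - 3) + 3) = 3 * maxprod (m - 3)"
      "maxprod ((m - 3 - j) + 3) = 3 * maxprod (m - 3 - j)"
      using False less.prems by (intro maxprod_add_3; simp)+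
    moreover have "(m - 3) + 3 = m" "(m - 3 - j) + 3 = m - j" using False less.prems by simp_all
    ultimately have "maxprod m = 3 * maxprod (m - 3)" "maxprod (m - j) = 3 * maxprod (m - 3 - j)"
      by simp_all
    moreover have "optimal_part m j = optimal_part (m - 3) j"
    proof -
      have "(m - 3 + 3) mod 3 = (m - 3) mod 3" by (rule mod_add_self2)
      moreover have "m - 3 + 3 = m" using False by simp
      ultimately have "(m - 3) mod 3 = m mod 3" by simp
      moreover have "m - 3 \<noteq> 1" "m - 3 \<noteq> 2" "m - 3 \<noteq> 4" "7 \<le> m - 3" using False by simp_all
      ultimately show ?thesis using False by (simp add: optimal_part_def)
    qed
    moreover have "(optimal_part (m - 3) j \<longrightarrow> j * maxprod (m - 3 - j) = maxprod (m - 3)) \<and>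
        (\<not> optimal_part (m - 3) j \<longrightarrow> 9 * j * maxprod (m - 3 - j) \<le> 8 * maxprod (m - 3))"
      by (rule less.IH) (use False less.prems in auto)
    ultimately show ?thesis by auto
  qed
qed

lemma maxprod_large_part:
  "8 \<le> j \<Longrightarrow> j \<le> m \<Longrightarrow> 9 * j * maxprod (m - j) \<le> 8 * maxprod m"
proof (induction j rule: less_induct)
  case (less j)
  have IH: "9 * (j - 3) * maxprod (m - (j - 3)) \<le> 8 * maxprod m"
  proof (cases "8 \<le> j - 3")
    case True
    show ?thesis by (rule less.IH) (use True less.prems in simp_all)
  next
    case False
    hence "\<not> optimal_part m (j - 3)" using less.prems by (auto simp: optimal_part_def)
    thus ?thesis using maxprod_small_part[of "j - 3" m] less.prems False by simp
  qed
  have "3 * maxprod (m - j) \<le> maxprod (m - (j - 3))"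
    using maxprod_add_3_ge[of "m - j"] less.prems by (simp add: add.commute)
  have "9 * j * maxprod (m - j) \<le> 9 * (3 * (j - 3)) * maxprod (m - j)"
    using less.prems by (intro mult_le_mono) auto
  also have "\<dots> = 9 * (j - 3) * (3 * maxprod (m - j))" by simp
  also have "\<dots> \<le> 9 * (j - 3) * maxprod (m - (j - 3))"
    using \<open>3 * maxprod (m - j) \<le> _\<close> by (rule mult_le_mono2)
  finally show ?case using IH by linarith
qed

lemma maxprod_optimal_part:
  assumes "1 \<le> j" "j \<le> m" "optimal_part m j"
  shows "j * maxprod (m - j) = maxprod m"
  using maxprod_small_part[OF assms(1) _ assms(2)] optimal_part_le_4[OF assms(3)] assms(3) by simp

lemma maxprod_nonoptimal_part:
  assumes "1 \<le> j" "j \<le> m" "\<not> optimal_part m j"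
  shows "9 * j * maxprod (m - j) \<le> 8 * maxprod m"
proof (cases "j \<le> 7")
  case True thus ?thesis using maxprod_small_part[OF assms(1) True assms(2)] assms(3) by simp
next
  case False thus ?thesis using maxprod_large_part[OF _ assms(2)] by simp
qed

lemma part_mul_maxprod_le:
  assumes "1 \<le> j" "j \<le> m"
  shows "real j ^ d * real (maxprod (m - j)) ^ d \<le> real (maxprod m) ^ d"
proof -
  have "j * maxprod (m - j) \<le> maxprod m"
    using maxprod_optimal_part[OF assms] maxprod_nonoptimal_part[OF assms] by (cases "optimal_part m j") auto
  hence "(real j * real (maxprod (m - j))) ^ d \<le> real (maxprod m) ^ d"
    by (intro power_mono) (auto simp flip: of_nat_mult)
  thus ?thesis by (simp add: power_mult_distrib)
qed

lemma mod3_cases: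
  fixes m :: nat
  obtains k where "m = 3 * k" | k where "m = 3 * k + 2" | "m = 1" | k where "m = 3 * k + 4"
proof -
  consider "m mod 3 = 0" | "m mod 3 = 2" | "m = 1" | "m mod 3 = 1" "m \<noteq> 1"
    by atomize_elim presburger
  thus ?thesis
  proof cases
    case 1
    hence "m = 3 * (m div 3)" by presburger
    thus ?thesis by (rule that(1))
  next
    case 2
    hence "m = 3 * (m div 3) + 2" by presburger
    thus ?thesis by (rule that(2))
  next
    case 3 thus ?thesis by (rule that(3))
  next
    case 4
    hence "m = 3 * (m div 3 - 1) + 4" by presburger
    thus ?thesis by (rule that(4))
  qed
qed

lemma optimal_parts:
  "m = 1 \<Longrightarrow> {j\<in>{1..m}. optimal_part m j} = {1}"
  "m = 2 \<Longrightarrow> {j\<in>{1..m}. optimal_part m j} = {2}"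
  "m = 4 \<Longrightarrow> {j\<in>{1..m}. optimal_part m j} = {2, 4}"
  "m \<ge> 3 \<Longrightarrow> m mod 3 = 0 \<Longrightarrow> {j\<in>{1..m}. optimal_part m j} = {3}"
  "m \<ge> 5 \<Longrightarrow> m mod 3 = 2 \<Longrightarrow> {j\<in>{1..m}. optimal_part m j} = {2, 3}"
  "m \<ge> 7 \<Longrightarrow> m mod 3 = 1 \<Longrightarrow> {j\<in>{1..m}. optimal_part m j} = {2, 3, 4}"
  by (auto simp: optimal_part_def)

lemma sum_optimal_parts:
  fixes f :: "nat \<Rightarrow> real"
  shows "m = 1 \<Longrightarrow> (\<Sum>j=1..m. if optimal_part m j then f (m - j) else 0) = f 0"
    "m = 2 \<Longrightarrow> (\<Sum>j=1..m. if optimal_part m j then f (m - j) else 0) = f 0"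
    "m = 4 \<Longrightarrow> (\<Sum>j=1..m. if optimal_part m j then f (m - j) else 0) = f 2 + f 0"
    "m \<ge> 3 \<Longrightarrow> m mod 3 = 0 \<Longrightarrow>
      (\<Sum>j=1..m. if optimal_part m j then f (m - j) else 0) = f (m - 3)"
    "m \<ge> 5 \<Longrightarrow> m mod 3 = 2 \<Longrightarrow>
      (\<Sum>j=1..m. if optimal_part m j then f (m - j) else 0) = f (m - 2) + f (m - 3)"
    "m \<ge> 7 \<Longrightarrow> m mod 3 = 1 \<Longrightarrow>
      (\<Sum>j=1..m. if optimal_part m j then f (m - j) else 0) = f (m - 2) + f (m - 3) + f (m - 4)"
  by (simp_all only: sum.inter_filter[symmetric] finite_atLeastAtMost optimal_parts) simp_all

(* The number of compositions of m whose product is maxprod m: all 3s; one 2 among k 3s;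
   two 2s or one 4 among k 3s. *)
definition num_optimal :: "nat \<Rightarrow> real" where
  "num_optimal m = (if m \<le> 1 \<or> m mod 3 = 0 then 1
     else if m mod 3 = 2 then real (m div 3 + 1)
     else real (m div 3) * (real (m div 3) + 3) / 2)"

lemma num_optimal_closed_form:
  "num_optimal (3 * k) = 1" "num_optimal (3 * k + 2) = real k + 1"
  "num_optimal (3 * k + 4) = (real k + 1) * (real k + 4) / 2"
proof -
  have "(3 * k + 2) mod 3 = 2" "(3 * k + 2) div 3 = k" "(3 * k + 4) mod 3 = 1" "(3 * k + 4) div 3 = k + 1"
    by presburger+
  thus "num_optimal (3 * k) = 1" "num_optimal (3 * k + 2) = real k + 1"
    "num_optimal (3 * k + 4) = (real k + 1) * (real k + 4) / 2"
    by (simp_all add: num_optimal_def algebra_simps)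
qed

lemma num_optimal_recurrence:
  assumes "1 \<le> m"
  shows "(\<Sum>j=1..m. if optimal_part m j then num_optimal (m - j) else 0) = num_optimal m"
proof (cases m rule: mod3_cases)
  case (1 k)
  hence "m \<ge> 3" "m mod 3 = 0" "m - 3 = 3 * (k - 1)" using assms by auto
  thus ?thesis using 1 sum_optimal_parts(4)[of m num_optimal] by (simp only: num_optimal_closed_form)
next
  case (2 k)
  show ?thesis
  proof (cases k)
    case 0
    hence "m = 2" using 2 by simp
    hence "(\<Sum>j=1..m. if optimal_part m j then num_optimal (m - j) else 0) = num_optimal 0"
      by (rule sum_optimal_parts(2))
    also have "\<dots> = num_optimal m" using \<open>m = 2\<close> by (simp add: num_optimal_def)
    finally show ?thesis .
  next
    case (Suc k')
    hence "m \<ge> 5" "m mod 3 = 2" "m - 2 = 3 * (k' + 1)" "m - 3 = 3 * k' + 2" using 2 by auto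
    thus ?thesis using 2 Suc sum_optimal_parts(5)[of m num_optimal]
      by (simp only: num_optimal_closed_form)
  qed
next
  case 3 thus ?thesis using sum_optimal_parts(1) by (simp add: num_optimal_def)
next
  case (4 k)
  show ?thesis
  proof (cases k)
    case 0 thus ?thesis using 4 sum_optimal_parts(3) by (simp add: num_optimal_def)
  next
    case (Suc k')
    hence "m \<ge> 7" "m mod 3 = 1" "m - 2 = 3 * (k' + 1) + 2" "m - 3 = 3 * k' + 4" "m - 4 = 3 * (k' + 1)"
      using 4 by auto
    thus ?thesis using 4 Suc sum_optimal_parts(6)[of m num_optimal]
      by (simp only: num_optimal_closed_form) (simp add: field_simps)
  qed
qed

lemma sum_optimal_parts_power_3:
  assumes "1 \<le> m"
  shows "(\<Sum>j=1..m. if optimal_part m j then (3::real) ^ (m - j) else 0) \<le> 3 ^ (m - 1)"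
proof (cases m rule: mod3_cases)
  case (1 k)
  hence "m \<ge> 3" "m mod 3 = 0" using assms by auto
  thus ?thesis using sum_optimal_parts(4)[of m "power 3"] by (simp add: power_increasing)
next
  case (2 k)
  show ?thesis
  proof (cases k)
    case 0 thus ?thesis using 2 sum_optimal_parts(2)[of m "power 3"] by simp
  next
    case (Suc k')
    hence "m \<ge> 5" "m mod 3 = 2" "m - 1 = 3 * k' + 4" "m - 2 = 3 * k' + 3" "m - 3 = 3 * k' + 2"
      using 2 by auto
    hence "(\<Sum>j=1..m. if optimal_part m j then (3::real) ^ (m - j) else 0)
        = 3 ^ (3 * k' + 3) + 3 ^ (3 * k' + 2)"
      using sum_optimal_parts(5)[of m "power 3"] by simp
    also have "\<dots> \<le> 3 ^ (m - 1)" using \<open>m - 1 = 3 * k' + 4\<close> by (simp add: power_add)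
    finally show ?thesis .
  qed
next
  case 3 thus ?thesis using sum_optimal_parts(1)[of m "power 3"] by simp
next
  case (4 k)
  show ?thesis
  proof (cases k)
    case 0 thus ?thesis using 4 sum_optimal_parts(3)[of m "power 3"] by simp
  next
    case (Suc k')
    hence "m \<ge> 7" "m mod 3 = 1" "m - 1 = 3 * k' + 6" "m - 2 = 3 * k' + 5" "m - 3 = 3 * k' + 4"
      "m - 4 = 3 * k' + 3" using 4 by auto
    hence "(\<Sum>j=1..m. if optimal_part m j then (3::real) ^ (m - j) else 0)
        = 3 ^ (3 * k' + 5) + 3 ^ (3 * k' + 4) + 3 ^ (3 * k' + 3)"
      using sum_optimal_parts(6)[of m "power 3"] by simp
    also have "\<dots> \<le> 3 ^ (m - 1)" using \<open>m - 1 = 3 * k' + 6\<close> by (simp add: power_add)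
    finally show ?thesis .
  qed
qed

(* The sum over the compositions of m of 2 to the number of parts: the crude bound replaces every
   sigma d j by 2 j^d. *)
definition comp_weight :: "nat \<Rightarrow> real" where
  "comp_weight m = (if m = 0 then 1 else 2 * 3 ^ (m - 1))"

lemma comp_weight_nonneg: "0 \<le> comp_weight m"
  by (simp add: comp_weight_def)

lemma sum_comp_weight: "1 \<le> m \<Longrightarrow> (\<Sum>j=1..m. comp_weight (m - j)) = 3 ^ (m - 1)"
proof (induction m rule: nat_induct_at_least)
  case (Suc m)
  have "(\<Sum>j=1..Suc m. comp_weight (Suc m - j))
      = comp_weight m + (\<Sum>j=Suc 1..Suc m. comp_weight (Suc m - j))"
    by (simp add: sum.atLeast_Suc_atMost)
  also have "(\<Sum>j=Suc 1..Suc m. comp_weight (Suc m - j)) = (\<Sum>j=1..m. comp_weight (m - j))"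
    by (simp only: sum.shift_bounds_cl_Suc_ivl) simp
  finally show ?case using Suc by (cases m) (simp_all add: comp_weight_def)
qed (simp add: comp_weight_def)

lemma qg_sigma_le_crude:
  assumes "m \<le> 2 ^ d"
  shows "qg (sigma d) m \<le> comp_weight m * real (maxprod m) ^ d"
  using assms
proof (induction m rule: less_induct)
  case (less m)
  show ?case
  proof (cases "m = 0")
    case True thus ?thesis by (simp add: qg_0 comp_weight_def)
  next
    case False
    have "qg (sigma d) m = (\<Sum>j=1..m. sigma d j * qg (sigma d) (m - j))"
      using False by (simp add: qg_recurrence)
    also have "\<dots> \<le> (\<Sum>j=1..m. 2 * comp_weight (m - j) * real (maxprod m) ^ d)"
    proof (rule sum_mono)
      fix j assume j: "j \<in> {1..m}"
      have "sigma d j * qg (sigma d) (m - j)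
          \<le> (2 * real j ^ d) * (comp_weight (m - j) * real (maxprod (m - j)) ^ d)"
        using j less by (intro mult_mono sigma_le_twice_power less.IH) (auto intro: qg_nonneg sigma_nonneg)
      also have "\<dots> = 2 * comp_weight (m - j) * (real j ^ d * real (maxprod (m - j)) ^ d)"
        by (simp add: algebra_simps)
      also have "\<dots> \<le> 2 * comp_weight (m - j) * real (maxprod m) ^ d"
        using part_mul_maxprod_le[of j m d] j comp_weight_nonneg[of "m - j"] by (intro mult_left_mono) auto
      finally show "sigma d j * qg (sigma d) (m - j) \<le> 2 * comp_weight (m - j) * real (maxprod m) ^ d" .
    qed
    also have "\<dots> = 2 * (\<Sum>j=1..m. comp_weight (m - j)) * real (maxprod m) ^ d"
      by (simp add: sum_distrib_left sum_distrib_right algebra_simps)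
    also have "\<dots> = comp_weight m * real (maxprod m) ^ d"
      using False sum_comp_weight[of m] by (simp add: comp_weight_def)
    finally show ?thesis .
  qed
qed

lemma sigma_mul_le_optimal:
  assumes "1 \<le> j" "j \<le> m" "optimal_part m j" "3 \<le> d" "0 \<le> x"
    and crude: "x \<le> comp_weight (m - j) * real (maxprod (m - j)) ^ d"
    and fine: "x \<le> (num_optimal (m - j) + (8/9) ^ d * 3 ^ (m - j)) * real (maxprod (m - j)) ^ d"
  shows "sigma d j * x \<le>
    (num_optimal (m - j) + (8/9) ^ d * (3 ^ (m - j) + comp_weight (m - j))) * real (maxprod m) ^ d"
proof -
  have eq: "real j ^ d * real (maxprod (m - j)) ^ d = real (maxprod m) ^ d"
    using maxprod_optimal_part[OF assms(1-3)] by (metis of_nat_mult power_mult_distrib)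
  \<comment> \<open>the proper divisors of j \<le> 4 contribute at most j (1/2)^d \<le> (8/9)^d relative to j^d\<close>
  have small: "real j * (1/2) ^ d \<le> (8/9) ^ d"
  proof -
    have "real j * (1/2) ^ d \<le> 4 * (1/2) ^ d"
      using optimal_part_le_4[OF assms(3)] by (intro mult_right_mono) auto
    also have "(4::real) \<le> (16/9) ^ 3" by (simp add: power3_eq_cube)
    also have "\<dots> \<le> (16/9) ^ d" using assms(4) by (intro power_increasing) auto
    also have "(16/9) ^ d * (1/2) ^ d = (8/9::real) ^ d" by (simp flip: power_mult_distrib)
    finally show ?thesis by simp
  qed
  have "sigma d j * x \<le> (real j ^ d + real j * (real j / 2) ^ d) * x"
    using assms(1,5) by (intro mult_right_mono sigma_le_proper_divisors) auto
  also have "\<dots> = real j ^ d * x + real j * (1/2) ^ d * (real j ^ d * x)"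
    by (simp add: algebra_simps power_divide)
  also have "\<dots> \<le> real j ^ d * ((num_optimal (m - j) + (8/9) ^ d * 3 ^ (m - j)) * real (maxprod (m - j)) ^ d)
      + (8/9) ^ d * (real j ^ d * (comp_weight (m - j) * real (maxprod (m - j)) ^ d))"
  proof (rule add_mono)
    show "real j * (1/2) ^ d * (real j ^ d * x)
      \<le> (8/9) ^ d * (real j ^ d * (comp_weight (m - j) * real (maxprod (m - j)) ^ d))"
      using assms(5) crude by (intro mult_mono small mult_left_mono) auto
  qed (use fine in \<open>simp add: mult_left_mono\<close>)
  also have "\<dots> = (num_optimal (m - j) + (8/9) ^ d * (3 ^ (m - j) + comp_weight (m - j)))
      * real (maxprod m) ^ d"
    by (simp add: eq[symmetric] algebra_simps)
  finally show ?thesis .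
qed

lemma sigma_mul_le_nonoptimal:
  assumes "1 \<le> j" "j \<le> m" "\<not> optimal_part m j" "j \<le> 2 ^ d" "0 \<le> x"
    and crude: "x \<le> comp_weight (m - j) * real (maxprod (m - j)) ^ d"
  shows "sigma d j * x \<le> (8/9) ^ d * (2 * comp_weight (m - j)) * real (maxprod m) ^ d"
proof -
  have "real (9 * j * maxprod (m - j)) \<le> real (8 * maxprod m)"
    using maxprod_nonoptimal_part[OF assms(1-3)] by (simp only: of_nat_le_iff)
  hence "real j * real (maxprod (m - j)) \<le> 8/9 * real (maxprod m)" by simp
  hence "(real j * real (maxprod (m - j))) ^ d \<le> (8/9 * real (maxprod m)) ^ d"
    by (intro power_mono) auto
  hence pow: "real j ^ d * real (maxprod (m - j)) ^ d \<le> (8/9) ^ d * real (maxprod m) ^ d"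
    by (simp only: power_mult_distrib)
  have "sigma d j * x \<le> (2 * real j ^ d) * (comp_weight (m - j) * real (maxprod (m - j)) ^ d)"
    using assms by (intro mult_mono sigma_le_twice_power crude) auto
  also have "\<dots> = 2 * comp_weight (m - j) * (real j ^ d * real (maxprod (m - j)) ^ d)"
    by (simp add: algebra_simps)
  also have "\<dots> \<le> 2 * comp_weight (m - j) * ((8/9) ^ d * real (maxprod m) ^ d)"
    using pow comp_weight_nonneg by (intro mult_left_mono) auto
  finally show ?thesis by (simp add: algebra_simps)
qed

lemma sum_refined_bound:
  assumes "1 \<le> m" and "0 \<le> e"
  shows "(\<Sum>j=1..m. (if optimal_part m j then num_optimal (m - j) else 0)
      + e * (if optimal_part m j then 3 ^ (m - j) else 0) + e * (2 * comp_weight (m - j)))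
    \<le> num_optimal m + e * 3 ^ m"
proof -
  have "(\<Sum>j=1..m. (if optimal_part m j then num_optimal (m - j) else 0)
      + e * (if optimal_part m j then 3 ^ (m - j) else 0) + e * (2 * comp_weight (m - j)))
    = (\<Sum>j=1..m. if optimal_part m j then num_optimal (m - j) else 0)
      + e * (\<Sum>j=1..m. if optimal_part m j then 3 ^ (m - j) else 0)
      + 2 * e * (\<Sum>j=1..m. comp_weight (m - j))"
    by (simp add: sum.distrib sum_distrib_left algebra_simps)
  also have "\<dots> \<le> num_optimal m + e * 3 ^ (m - 1) + 2 * e * 3 ^ (m - 1)"
    using num_optimal_recurrence[OF assms(1)] sum_optimal_parts_power_3[OF assms(1)]
      sum_comp_weight[OF assms(1)] assms(2)
    by (simp add: mult_left_mono)
  also have "\<dots> = num_optimal m + e * 3 ^ m"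
    using assms(1) by (cases m) (simp_all add: algebra_simps)
  finally show ?thesis .
qed

lemma qg_sigma_le_refined:
  assumes "3 \<le> d" "m \<le> 2 ^ d"
  shows "qg (sigma d) m \<le> (num_optimal m + (8/9) ^ d * 3 ^ m) * real (maxprod m) ^ d"
  using assms(2)
proof (induction m rule: less_induct)
  case (less m)
  define e where "e = (8/9::real) ^ d"
  show ?case
  proof (cases "m = 0")
    case True thus ?thesis by (simp add: qg_0 num_optimal_def)
  next
    case False
    have "qg (sigma d) m = (\<Sum>j=1..m. sigma d j * qg (sigma d) (m - j))"
      using False by (simp add: qg_recurrence)
    also have "\<dots> \<le> (\<Sum>j=1..m. ((if optimal_part m j then num_optimal (m - j) else 0)
        + e * (if optimal_part m j then 3 ^ (m - j) else 0) + e * (2 * comp_weight (m - j)))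
        * real (maxprod m) ^ d)"
    proof (rule sum_mono)
      fix j assume j: "j \<in> {1..m}"
      have crude: "qg (sigma d) (m - j) \<le> comp_weight (m - j) * real (maxprod (m - j)) ^ d"
        using j less.prems by (intro qg_sigma_le_crude) auto
      show "sigma d j * qg (sigma d) (m - j) \<le> ((if optimal_part m j then num_optimal (m - j) else 0)
        + e * (if optimal_part m j then 3 ^ (m - j) else 0) + e * (2 * comp_weight (m - j)))
        * real (maxprod m) ^ d"
      proof (cases "optimal_part m j")
        case True
        have "sigma d j * qg (sigma d) (m - j) \<le>
          (num_optimal (m - j) + e * (3 ^ (m - j) + comp_weight (m - j))) * real (maxprod m) ^ d"
          unfolding e_def using j less assms(1) crude True
          by (intro sigma_mul_le_optimal less.IH) (auto intro: qg_nonneg sigma_nonneg)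
        also have "\<dots> \<le> (num_optimal (m - j) + e * 3 ^ (m - j) + e * (2 * comp_weight (m - j)))
            * real (maxprod m) ^ d"
          using comp_weight_nonneg[of "m - j"] by (intro mult_right_mono) (simp_all add: e_def ring_distribs)
        finally show ?thesis using True by simp
      next
        case False
        have "sigma d j * qg (sigma d) (m - j) \<le> e * (2 * comp_weight (m - j)) * real (maxprod m) ^ d"
          unfolding e_def using j less.prems crude False
          by (intro sigma_mul_le_nonoptimal) (auto intro: qg_nonneg sigma_nonneg)
        thus ?thesis using False by simp
      qed
    qed
    also have "\<dots> \<le> (num_optimal m + e * 3 ^ m) * real (maxprod m) ^ d"
      unfolding sum_distrib_right[symmetric] using False
      by (intro mult_right_mono sum_refined_bound) (simp_all add: e_def)
    finally show ?thesis unfolding e_def .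
  qed
qed

lemma qg_sigma_ge_3k: "(3 ^ d) ^ k \<le> qg (sigma d) (3 * k)"
proof (induction k)
  case (Suc k)
  have "3 ^ d * (3 ^ d) ^ k \<le> sigma d 3 * qg (sigma d) (3 * k)"
    using Suc power_le_sigma[of 3 d] sigma_nonneg by (intro mult_mono) auto
  also have "\<dots> \<le> qg (sigma d) (3 * Suc k)"
    using qg_ge_partial_sum[of "sigma d" "{3}" "3 * Suc k"] by (simp add: sigma_nonneg)
  finally show ?case by simp
qed (simp add: qg_0)

lemma qg_sigma_ge_3k_2: "(real k + 1) * 2 ^ d * (3 ^ d) ^ k \<le> qg (sigma d) (3 * k + 2)"
proof (induction k)
  case 0
  have "sigma d 2 * qg (sigma d) 0 \<le> qg (sigma d) 2"
    using qg_ge_partial_sum[of "sigma d" "{2}" 2] sigma_nonneg by simp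
  thus ?case using power_le_sigma[of 2 d] by (simp add: qg_0 numeral_2_eq_2)
next
  case (Suc k)
  have "(real (Suc k) + 1) * 2 ^ d * (3 ^ d) ^ Suc k
      = 2 ^ d * (3 ^ d) ^ Suc k + 3 ^ d * ((real k + 1) * 2 ^ d * (3 ^ d) ^ k)"
    by (simp add: algebra_simps)
  also have "\<dots> \<le> sigma d 2 * qg (sigma d) (3 * Suc k) + sigma d 3 * qg (sigma d) (3 * k + 2)"
    using Suc power_le_sigma[of 2 d] power_le_sigma[of 3 d] qg_sigma_ge_3k[of d "Suc k"] sigma_nonneg
    by (intro add_mono mult_mono) auto
  also have "\<dots> \<le> qg (sigma d) (3 * Suc k + 2)"
    using qg_ge_partial_sum[of "sigma d" "{2, 3}" "3 * Suc k + 2"] by (simp add: sigma_nonneg)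
  finally show ?case .
qed

lemma real_maxprod_power:
  "real (maxprod (3 * k)) ^ d = (3 ^ d) ^ k"
  "real (maxprod (3 * k + 2)) ^ d = 2 ^ d * (3 ^ d) ^ k"
  "real (maxprod (3 * k + 4)) ^ d = 4 ^ d * (3 ^ d) ^ k"
proof -
  have "real (c * 3 ^ k) ^ d = real c ^ d * ((3::real) ^ d) ^ k" for c
    by (simp add: power_mult_distrib power_mult[symmetric] mult.commute)
  from this[of 1] this[of 2] this[of 4] show
    "real (maxprod (3 * k)) ^ d = (3 ^ d) ^ k"
    "real (maxprod (3 * k + 2)) ^ d = 2 ^ d * (3 ^ d) ^ k"
    "real (maxprod (3 * k + 4)) ^ d = 4 ^ d * (3 ^ d) ^ k"
    unfolding maxprod_closed_form by simp_all
qed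

lemma power_3_squared_eq: "((3::real) ^ d) ^ 2 = (9/8) ^ d * (2 ^ d) ^ 3"
proof -
  have "((3::real) ^ d) ^ 2 = (3 ^ 2) ^ d" "((2::real) ^ d) ^ 3 = (2 ^ 3) ^ d"
    by (metis mult.commute power_mult)+
  thus ?thesis by (simp flip: power_mult_distrib)
qed

lemma power_4_eq: "(4::real) ^ d = (2 ^ d) ^ 2"
proof -
  have "((2::real) ^ d) ^ 2 = (2 ^ 2) ^ d" by (metis mult.commute power_mult)
  thus ?thesis by simp
qed

lemma qg_sigma_log_concave_at_3k_3:
  assumes "3 * k + 4 \<le> 2 ^ d" and "3 ^ (6 * k + 6) < (9/8::real) ^ d"
  shows "qg (sigma d) (3 * k + 2) * qg (sigma d) (3 * k + 4) \<le> qg (sigma d) (3 * k + 3) ^ 2"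
proof -
  define a b c E where "a = (2::real) ^ d" and "b = (3::real) ^ d" and "c = b ^ k"
    and "E = (9/8::real) ^ d"
  have pos: "0 \<le> a" "0 \<le> c" by (simp_all add: a_def b_def c_def)
  have bE: "b ^ 2 = E * a ^ 3" unfolding a_def b_def E_def by (rule power_3_squared_eq)
  have "qg (sigma d) (3 * k + 2) \<le> 2 * 3 ^ (3 * k + 1) * (a * c)"
    using qg_sigma_le_crude[of "3 * k + 2" d] real_maxprod_power(2)[of k d] assms(1)
    by (simp add: comp_weight_def a_def b_def c_def)
  moreover have "qg (sigma d) (3 * k + 4) \<le> 2 * 3 ^ (3 * k + 3) * (a ^ 2 * c)"
    using qg_sigma_le_crude[of "3 * k + 4" d] real_maxprod_power(3)[of k d] assms(1)
    by (simp add: comp_weight_def a_def b_def c_def power_4_eq ac_simps)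
  ultimately have "qg (sigma d) (3 * k + 2) * qg (sigma d) (3 * k + 4)
      \<le> (2 * 3 ^ (3 * k + 1) * (a * c)) * (2 * 3 ^ (3 * k + 3) * (a ^ 2 * c))"
    using pos by (intro mult_mono) (auto intro: qg_nonneg sigma_nonneg)
  also have "\<dots> = 4 * 3 ^ (6 * k + 4) * (a ^ 3 * c ^ 2)"
  proof -
    have "(3::real) ^ (6 * k + 4) = 3 ^ (3 * k + 1) * 3 ^ (3 * k + 3)"
      by (simp only: power_add[symmetric]) simp
    thus ?thesis by (simp only:) (simp add: power2_eq_square power3_eq_cube)
  qed
  also have "\<dots> \<le> 3 ^ (6 * k + 6) * (a ^ 3 * c ^ 2)"
    using pos by (intro mult_right_mono) (simp_all add: power_add)
  also have "\<dots> \<le> E * (a ^ 3 * c ^ 2)"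
    using assms(2) pos by (intro mult_right_mono) (simp_all add: E_def)
  also have "\<dots> = (b * c) ^ 2" by (simp add: bE power_mult_distrib)
  also have "\<dots> \<le> qg (sigma d) (3 * k + 3) ^ 2"
    using qg_sigma_ge_3k[of d "k + 1"] pos by (intro power_mono) (simp_all add: b_def c_def ac_simps)
  finally show ?thesis .
qed

lemma qg_sigma_le_refined_closed_form:
  assumes "3 \<le> d"
  shows "3 * k \<le> 2 ^ d \<Longrightarrow> qg (sigma d) (3 * k) \<le> (1 + (8/9) ^ d * 3 ^ (3 * k)) * (3 ^ d) ^ k"
    and "3 * k + 4 \<le> 2 ^ d \<Longrightarrow> qg (sigma d) (3 * k + 4)
      \<le> ((real k + 1) * (real k + 4) / 2 + (8/9) ^ d * 3 ^ (3 * k + 4)) * (4 ^ d * (3 ^ d) ^ k)"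
  using qg_sigma_le_refined[OF assms, of "3 * k"] qg_sigma_le_refined[OF assms, of "3 * k + 4"]
  unfolding num_optimal_closed_form real_maxprod_power by simp_all

lemma qg_sigma_log_concave_at_3k_5:
  assumes "3 \<le> d" and "3 * k + 6 \<le> 2 ^ d" and "2 * 3 ^ (3 * k + 6) < (9/8::real) ^ d"
  shows "qg (sigma d) (3 * k + 4) * qg (sigma d) (3 * k + 6) \<le> qg (sigma d) (3 * k + 5) ^ 2"
proof -
  define a b c where "a = (2::real) ^ d" and "b = (3::real) ^ d" and "c = b ^ k"
  define e where "e = (8/9::real) ^ d * 3 ^ (3 * k + 6)"
  define p where "p = (real k + 1) * (real k + 4) / 2"
  have pos: "0 \<le> a" "0 \<le> b" "0 \<le> c" "0 \<le> e" "0 \<le> p"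
    by (simp_all add: a_def b_def c_def e_def p_def)
  have e_small: "2 * e < 1"
  proof -
    have "(8/9::real) ^ d * (2 * 3 ^ (3 * k + 6)) < (8/9) ^ d * (9/8) ^ d"
      using assms(3) by (intro mult_strict_left_mono) auto
    thus ?thesis by (simp add: e_def flip: power_mult_distrib)
  qed
  have "(3::real) ^ (3 * k + 6) = 9 * 3 ^ (3 * k + 4)" by (simp add: power_add)
  hence lo: "qg (sigma d) (3 * k + 4) \<le> (p + e / 9) * (a ^ 2 * c)"
    using qg_sigma_le_refined_closed_form(2)[of d k] assms(1,2)
    by (simp add: a_def b_def c_def e_def p_def power_4_eq)
  have "3 * (k + 2) = 3 * k + 6" and "((3::real) ^ d) ^ (k + 2) = b ^ 2 * c"
    by (simp_all add: b_def c_def power_add power2_eq_square mult.commute)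
  note bound = qg_sigma_le_refined_closed_form(1)[of d "k + 2", unfolded this]
  have hi: "qg (sigma d) (3 * k + 6) \<le> (1 + e) * (b ^ 2 * c)"
    using bound assms(1,2) unfolding e_def by simp
  from lo hi
  have "qg (sigma d) (3 * k + 4) * qg (sigma d) (3 * k + 6)
      \<le> ((p + e / 9) * (a ^ 2 * c)) * ((1 + e) * (b ^ 2 * c))"
    using pos by (intro mult_mono) (auto intro: qg_nonneg sigma_nonneg)
  also have "\<dots> = ((p + e / 9) * (1 + e)) * (a * b * c) ^ 2"
    by (simp add: power2_eq_square algebra_simps)
  also have "\<dots> \<le> (real k + 2) ^ 2 * (a * b * c) ^ 2"
  proof (rule mult_right_mono)
    have "(p + e / 9) * (1 + e) \<le> (p + 1 / 18) * (3 / 2)"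
      using e_small pos by (intro mult_mono) auto
    also have "\<dots> \<le> (real k + 2) ^ 2" by (simp add: p_def power2_eq_square field_simps)
    finally show "(p + e / 9) * (1 + e) \<le> (real k + 2) ^ 2" .
  qed simp
  also have "\<dots> = ((real k + 2) * a * (b * c)) ^ 2" by (simp add: power_mult_distrib)
  also have "\<dots> \<le> qg (sigma d) (3 * k + 5) ^ 2"
    using qg_sigma_ge_3k_2[of "k + 1" d] pos
    by (intro power_mono) (simp_all add: a_def b_def c_def algebra_simps)
  finally show ?thesis .
qed

lemma qg_sigma_log_convex_at_3k_4:
  assumes "3 * k + 5 \<le> 2 ^ d" and "3 ^ (6 * k + 9) < (9/8::real) ^ d * (3 * real k + 6)"
  shows "qg (sigma d) (3 * k + 4) ^ 2 < qg (sigma d) (3 * k + 3) * qg (sigma d) (3 * k + 5)"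
proof -
  define a b c E where "a = (2::real) ^ d" and "b = (3::real) ^ d" and "c = b ^ k"
    and "E = (9/8::real) ^ d"
  have pos: "0 < a" "0 < b" "0 < c" by (simp_all add: a_def b_def c_def)
  have bE: "b ^ 2 = E * a ^ 3" unfolding a_def b_def E_def by (rule power_3_squared_eq)
  have "qg (sigma d) (3 * k + 4) \<le> 2 * 3 ^ (3 * k + 3) * (a ^ 2 * c)"
    using qg_sigma_le_crude[of "3 * k + 4" d] real_maxprod_power(3)[of k d] assms(1)
    by (simp add: comp_weight_def a_def b_def c_def power_4_eq ac_simps)
  hence "qg (sigma d) (3 * k + 4) ^ 2 \<le> (2 * 3 ^ (3 * k + 3) * (a ^ 2 * c)) ^ 2"
    by (intro power_mono) (auto intro: qg_nonneg sigma_nonneg)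
  also have "\<dots> = 4 * 3 ^ (6 * k + 6) * (a ^ 4 * c ^ 2)"
    by (simp add: power_mult_distrib power_mult[symmetric] mult.commute algebra_simps)
  also have "\<dots> < ((real k + 2) * E) * (a ^ 4 * c ^ 2)"
  proof (rule mult_strict_right_mono)
    have "3 ^ (6 * k + 9) < E * (3 * (real k + 2))" using assms(2) by (simp add: E_def algebra_simps)
    hence "27 * 3 ^ (6 * k + 6) < 3 * ((real k + 2) * E)" by (simp add: power_add algebra_simps)
    moreover have "(0::real) < 3 ^ (6 * k + 6)" by simp
    ultimately show "4 * 3 ^ (6 * k + 6) < (real k + 2) * E" by linarith
  qed (use pos in simp)
  also have "\<dots> = (real k + 2) * a * c ^ 2 * (E * a ^ 3)"
    by (simp add: power2_eq_square power3_eq_cube power4_eq_xxxx algebra_simps)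
  also have "\<dots> = (b * c) * ((real k + 2) * a * (b * c))"
    by (simp add: bE[symmetric] power2_eq_square algebra_simps)
  also have "\<dots> \<le> qg (sigma d) (3 * k + 3) * qg (sigma d) (3 * k + 5)"
    using qg_sigma_ge_3k[of d "k + 1"] qg_sigma_ge_3k_2[of "k + 1" d] pos
    by (intro mult_mono) (simp_all add: b_def c_def a_def algebra_simps, auto intro: qg_nonneg sigma_nonneg)
  finally show ?thesis .
qed

lemma less_power_of_log_less:
  assumes "log b x < real d" and "1 < b" and "0 < x"
  shows "x < b ^ d"
  using assms by (simp add: log_less_iff powr_realpow)

lemma Dsigma_bounds:
  fixes n d :: nat
  assumes "3 \<le> n" and "Dsigma n < real d"
  shows "n mod 3 = 0 \<Longrightarrow> 3 ^ (2 * n) < (9/8::real) ^ d"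
    and "n mod 3 = 1 \<Longrightarrow> 3 ^ (2 * n + 1) < (9/8::real) ^ d * (real n + 2)"
    and "2 * 3 ^ (n + 1) < (9/8::real) ^ d"
proof -
  have log_3: "log (9/8) (3 ^ k) = real k * log (9/8) 3" for k :: nat by (simp add: log_nat_power)
  show mod0: "3 ^ (2 * n) < (9/8::real) ^ d" if "n mod 3 = 0"
  proof -
    have "log (9/8) (3 ^ (2 * n)) < real d" using that assms(2) unfolding Dsigma_def log_3 by simp
    thus ?thesis by (rule less_power_of_log_less) simp_all
  qed
  show mod1: "3 ^ (2 * n + 1) < (9/8::real) ^ d * (real n + 2)" if "n mod 3 = 1"
  proof -
    have "log (9/8) (3 ^ (2 * n + 1) / (real n + 2)) = log (9/8) (3 ^ (2 * n + 1)) - log (9/8) (real n + 2)"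
      by (rule log_divide_pos) auto
    hence "log (9/8) (3 ^ (2 * n + 1) / (real n + 2)) < real d"
      using that assms(2) unfolding Dsigma_def log_3 by (simp add: add.commute)
    hence "3 ^ (2 * n + 1) / (real n + 2) < (9/8::real) ^ d"
      by (rule less_power_of_log_less) simp_all
    thus ?thesis by (simp add: divide_less_eq)
  qed
  consider "n mod 3 = 0" | "n mod 3 = 1" | "n = 5" | "n mod 3 = 2" "n \<noteq> 5" by linarith
  thus "2 * 3 ^ (n + 1) < (9/8::real) ^ d"
  proof cases
    case 1
    have "(3::real) ^ 2 \<le> 3 ^ (n - 1)" using assms(1) by (intro power_increasing) auto
    hence "2 * 3 ^ (n + 1) \<le> (3::real) ^ (n - 1) * 3 ^ (n + 1)" by simp
    also have "\<dots> = 3 ^ (2 * n)"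
    proof -
      have "2 * n = (n - 1) + (n + 1)" using assms(1) by simp
      thus ?thesis by (simp only: power_add)
    qed
    finally show ?thesis using mod0[OF 1] by simp
  next
    case 2
    have "real (2 * (n + 2)) \<le> real (3 ^ n)"
      using assms(1) by (induction n rule: nat_induct_at_least) (simp_all del: of_nat_power)
    hence "3 ^ (n + 1) * (2 * (real n + 2)) \<le> 3 ^ (n + 1) * 3 ^ n"
      by (intro mult_left_mono) simp_all
    hence "2 * 3 ^ (n + 1) * (real n + 2) \<le> 3 ^ n * 3 ^ (n + 1)" by (simp only: ac_simps)
    also have "\<dots> = 3 ^ (2 * n + 1)" by (simp flip: power_add)
    finally have "2 * 3 ^ (n + 1) * (real n + 2) < (9/8) ^ d * (real n + 2)"
      using mod1[OF 2] by linarith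
    thus ?thesis by (rule mult_right_less_imp_less) simp
  next
    case 3
    hence "log (9/8) 3888 < real d" using assms(2) unfolding Dsigma_def by simp
    hence "3888 < (9/8::real) ^ d" by (rule less_power_of_log_less) simp_all
    thus ?thesis using 3 by simp
  next
    case 4
    have "log (9/8) (2 * 3 ^ (n + 1)) = log (9/8) 2 + log (9/8) (3 ^ (n + 1))"
      by (rule log_mult_pos) auto
    also have "\<dots> = log (9/8) 2 + (real n + 1) * log (9/8) 3" by (simp only: log_3) simp
    also have "\<dots> < real d" using 4 assms(2) unfolding Dsigma_def by simp
    finally show ?thesis by (rule less_power_of_log_less) simp_all
  qed
qed

lemma exponent_bounds:
  assumes "2 * 3 ^ (n + 1) < (9/8::real) ^ d"
  shows "3 \<le> d" and "n + 1 \<le> 2 ^ d"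
proof -
  show "3 \<le> d"
  proof (rule ccontr)
    assume "\<not> 3 \<le> d"
    hence "(9/8::real) ^ d \<le> (9/8) ^ 2" by (intro power_increasing) auto
    moreover have "(1::real) \<le> 3 ^ (n + 1)" by (rule one_le_power) simp
    moreover have "(9/8::real) ^ 2 = 81/64" by (simp add: power2_eq_square)
    ultimately show False using assms by linarith
  qed
  have "m < (3::nat) ^ m" for m by (induction m) auto
  hence "real (n + 1) < 3 ^ (n + 1)" by (metis of_nat_less_iff of_nat_numeral of_nat_power)
  also have "\<dots> \<le> 2 * 3 ^ (n + 1)" by simp
  also have "\<dots> < (9/8) ^ d" by (rule assms)
  also have "\<dots> \<le> 2 ^ d" by (intro power_mono) auto
  finally have "real (n + 1) < real ((2::nat) ^ d)" by simp
  thus "n + 1 \<le> 2 ^ d" by (simp only: of_nat_less_iff)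
qed

theorem corollary2:
  fixes n d :: nat
  assumes "n \<ge> 3" and "real d > Dsigma n"
  shows "(qg (sigma d) n)^2 / (qg (sigma d) (n - 1) * qg (sigma d) (n + 1)) < 1
         \<longleftrightarrow> n mod 3 = 1"
proof -
  have big: "2 * 3 ^ (n + 1) < (9/8::real) ^ d" by (rule Dsigma_bounds(3)[OF assms])
  note exps = exponent_bounds[OF big]
  have "(qg (sigma d) n)^2 / (qg (sigma d) (n - 1) * qg (sigma d) (n + 1)) < 1
      \<longleftrightarrow> (qg (sigma d) n)^2 < qg (sigma d) (n - 1) * qg (sigma d) (n + 1)"
    using qg_sigma_pos[of d "n - 1"] qg_sigma_pos[of d "n + 1"] by (simp add: divide_less_eq)
  also have "\<dots> \<longleftrightarrow> n mod 3 = 1"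
  proof (cases n rule: mod3_cases)
    case (1 k)
    then obtain k' where "n = 3 * k' + 3" using assms(1) by (cases k) auto
    thus ?thesis using qg_sigma_log_concave_at_3k_3[of k' d] Dsigma_bounds(1)[OF assms] exps
      by (simp add: algebra_simps)
  next
    case (2 k)
    then obtain k' where "n = 3 * k' + 5" using assms(1) by (cases k) auto
    thus ?thesis using qg_sigma_log_concave_at_3k_5[of d k'] big exps by (simp add: algebra_simps)
  next
    case 3
    thus ?thesis using assms(1) by simp
  next
    case (4 k)
    thus ?thesis using qg_sigma_log_convex_at_3k_4[of k d] Dsigma_bounds(2)[OF assms] exps
      by (simp add: algebra_simps)
  qed
  finally show ?thesis .
qed

end
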